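(* Let $1\le p\le\infty$, $E=\mathcal{L}^p(I)$, and let $F,B\subset E$ be nonempty sets bounded by $M_F$ and $M_B$ respectively (i.e. $\|g\|_p\le M_F$ for all $g\in F$ and $\|g\|_p\le M_B$ for all $g\in B$). Then for any $f,b\in E$, $$\delta(F,F*_Tb)\le\frac{\Lambda}{1-\Lambda}(M_F+\|b\|_p),\qquad \delta(B,f*_TB)\le\frac{1}{1-\Lambda}(M_B+\|f\|_p).$$ For $0<p<1$ the same holds when $\|g\|_p$ is interpreted as $\int_I|g|^p\,dx$ (including in $\delta$ and in the bounds $M_F,M_B$) and $\Lambda$ is replaced by $\Lambda^p$.
   Context: Let $N\ge 2$, $I=[x_0,x_N]$, $\Delta: x_0<\dots<x_N$ a partition, $L_n(x)=a_nx+b_n$ affine with $L_n(x_0)=x_{n-1}$, $L_n(x_N)=x_n$, $I_1=[x_0,x_1]$, $I_n=(x_{n-1},x_n]$ for $n\ge2$, and $\alpha=(\alpha_1,\dots,\alpha_N)\in(\mathcal{L}^\infty(I))^N$ with $\Lambda:=\operatorname{ess\,sup}\{|\alpha_n(x)|:x\in I,n=1,\dots,N\}<1$. For $f,b\in\mathcal{L}^p(I)$, $f*_Tb$ is the unique fixed point in $\mathcal{L}^p(I)$ of the contraction $Tg(x):=f(x)+\alpha_n(L_n^{-1}(x))(g-b)(L_n^{-1}(x))$, $x\in I_n$. For sets $F,B\subset E$: $F*_Tb:=\{f*_Tb: f\in F\}$, $f*_TB:=\{f*_Tb: b\in B\}$. For subsets $A,C$, $\delta(A,C):=\inf\{\|g-g'\|_p: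 g\in A, g'\in C\}$. *)

theory Defs
  imports "HOL-Analysis.Analysis" "HOL-Probability.Essential_Supremum"
begin

definition Iint :: "(nat \<Rightarrow> real) \<Rightarrow> nat \<Rightarrow> real set" where
  "Iint xs N = {xs 0 .. xs N}"

definition Ipart :: "(nat \<Rightarrow> real) \<Rightarrow> nat \<Rightarrow> real set" where
  "Ipart xs n = (if n = 1 then {xs 0 .. xs 1} else {xs (n - 1) <.. xs n})"

text \<open>The affine map L_n with L_n(x_0) = x_{n-1}, L_n(x_N) = x_n, and its inverse.\<close>
definition Laff :: "(nat \<Rightarrow> real) \<Rightarrow> nat \<Rightarrow> nat \<Rightarrow> real \<Rightarrow> real" where
  "Laff xs N n t = xs (n - 1) + (xs n - xs (n - 1)) / (xs N - xs 0) * (t - xs 0)"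

definition Linv :: "(nat \<Rightarrow> real) \<Rightarrow> nat \<Rightarrow> nat \<Rightarrow> real \<Rightarrow> real" where
  "Linv xs N n y = xs 0 + (xs N - xs 0) / (xs n - xs (n - 1)) * (y - xs (n - 1))"

definition lpnorm :: "(nat \<Rightarrow> real) \<Rightarrow> nat \<Rightarrow> ennreal \<Rightarrow> (real \<Rightarrow> real) \<Rightarrow> real" where
  "lpnorm xs N p g =
    (if p = \<infinity> then real_of_ereal (esssup (lebesgue_on (Iint xs N)) (\<lambda>t. ereal \<bar>g t\<bar>))
     else if p < 1 then enn2real (\<integral>\<^sup>+ t. ennreal (\<bar>g t\<bar> powr enn2real p) \<partial>lebesgue_on (Iint xs N))
     else enn2real (\<integral>\<^sup>+ t. ennreal (\<bar>g t\<bar> powr enn2real p) \<partial>lebesgue_on (Iint xs N))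
            powr (1 / enn2real p))"

text \<open>The space L^p(I) (as a set of functions, not equivalence classes).\<close>
definition Lp :: "(nat \<Rightarrow> real) \<Rightarrow> nat \<Rightarrow> ennreal \<Rightarrow> (real \<Rightarrow> real) set" where
  "Lp xs N p = {g. g \<in> borel_measurable (lebesgue_on (Iint xs N)) \<and>
     (if p = \<infinity> then esssup (lebesgue_on (Iint xs N)) (\<lambda>t. ereal \<bar>g t\<bar>) < \<infinity>
      else (\<integral>\<^sup>+ t. ennreal (\<bar>g t\<bar> powr enn2real p) \<partial>lebesgue_on (Iint xs N)) < \<infinity>)}"

definition Lam :: "(nat \<Rightarrow> real) \<Rightarrow> nat \<Rightarrow> (nat \<Rightarrow> real \<Rightarrow> real) \<Rightarrow> ereal" where
  "Lam xs N \<alpha> = Max ((\<lambda>n. esssup (lebesgue_on (Iint xs N)) (\<lambda>t. ereal \<bar>\<alpha> n t\<bar>)) ` {1..N})"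

definition Top :: "(nat \<Rightarrow> real) \<Rightarrow> nat \<Rightarrow> (nat \<Rightarrow> real \<Rightarrow> real) \<Rightarrow>
    (real \<Rightarrow> real) \<Rightarrow> (real \<Rightarrow> real) \<Rightarrow> (real \<Rightarrow> real) \<Rightarrow> real \<Rightarrow> real" where
  "Top xs N \<alpha> f b g y = f y + (\<Sum>n\<in>{1..N}. indicator (Ipart xs n) y *
      (\<alpha> n (Linv xs N n y) * (g (Linv xs N n y) - b (Linv xs N n y))))"

text \<open>f *_T b: the (a.e. unique) fixed point of T in L^p(I).\<close>
definition fstar :: "(nat \<Rightarrow> real) \<Rightarrow> nat \<Rightarrow> (nat \<Rightarrow> real \<Rightarrow> real) \<Rightarrow> ennreal \<Rightarrow>
    (real \<Rightarrow> real) \<Rightarrow> (real \<Rightarrow> real) \<Rightarrow> (real \<Rightarrow> real)" where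
  "fstar xs N \<alpha> p f b = (SOME h. h \<in> Lp xs N p \<and>
      (AE y in lebesgue_on (Iint xs N). Top xs N \<alpha> f b h y = h y))"

definition delta :: "(nat \<Rightarrow> real) \<Rightarrow> nat \<Rightarrow> ennreal \<Rightarrow> (real \<Rightarrow> real) set \<Rightarrow> (real \<Rightarrow> real) set \<Rightarrow> real" where
  "delta xs N p A C = Inf {lpnorm xs N p (\<lambda>t. g t - g' t) | g g'. g \<in> A \<and> g' \<in> C}"

end

(*
  For h = f *_T b the fixed-point equation says h - f = A (h - b) almost everywhere, where
  A phi = alpha_n(L_n^-1 .) phi(L_n^-1 .) on I_n is the linear part of T.  Since L_n^-1 maps I_n
  affinely onto I with slope |I| / |I_n| and the relative lengths |I_n| / |I| sum to 1, a change of
  variables gives int |A phi|^p <= Lambda^p int |phi|^p and ess sup |A phi| <= Lambda ess sup |phi|.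
  So A is a contraction for the (quasi-)norm of L^p(I), with constant L = Lambda, or L = Lambda^p
  when 0 < p < 1.  Then
    ||h - f|| <= L ||h - b|| <= L (||h - f|| + ||f|| + ||b||),
    ||h - b|| <= ||h - f|| + ||f|| + ||b|| <= L ||h - b|| + ||f|| + ||b||,
  and evaluating delta at any single pair (f, f *_T b), resp. (b, f *_T b), gives both bounds.

  As f *_T b is defined by choice, the fixed point must also be shown to exist: it is the Neumann
  series of A applied to f - A b, whose absolute partial sums are bounded in L^p and hence, by
  monotone convergence, dominated almost everywhere by a single function of L^p(I).
*)
theory Submission
  imports Defs
begin

section \<open>Elementary inequalities for powers\<close>

lemma convex_powr_combination:
  fixes q t X Y :: real
  assumes "1 \<le> q" "0 \<le> X" "0 \<le> Y" "0 \<le> t" "t \<le> 1"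
  shows "((1 - t) * X + t * Y) powr q \<le> (1 - t) * X powr q + t * Y powr q"
proof (cases "X = 0 \<or> Y = 0")
  case True
  have "s powr q \<le> s" if "0 \<le> s" "s \<le> 1" for s :: real
    using powr_mono'[of 1 q s] that assms(1) by simp
  with True assms show ?thesis
    by (auto simp: powr_mult intro!: mult_right_mono)
next
  case False
  with assms have "X \<in> {0<..}" "Y \<in> {0<..}" by auto
  from convex_onD[OF powr_convex[OF assms(1)] assms(4,5) this] show ?thesis by simp
qed

lemma abs_add_powr_le_weighted:
  fixes q l a b :: real
  assumes q: "1 \<le> q" and l: "0 < l" "l < 1"
  shows "\<bar>a + b\<bar> powr q \<le> l powr (1 - q) * \<bar>a\<bar> powr q + (1 - l) powr (1 - q) * \<bar>b\<bar> powr q"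
proof -
  have rescale: "c * (x / c) powr q = c powr (1 - q) * x powr q" if "0 < c" "0 \<le> x" for c x :: real
    using that by (simp add: powr_divide powr_diff)
  have "\<bar>a + b\<bar> powr q \<le> (\<bar>a\<bar> + \<bar>b\<bar>) powr q"
    using q by (intro powr_mono2) (auto simp: abs_triangle_ineq)
  also have "\<bar>a\<bar> + \<bar>b\<bar> = (1 - (1 - l)) * (\<bar>a\<bar> / l) + (1 - l) * (\<bar>b\<bar> / (1 - l))"
    using l by simp
  also have "(\<dots>) powr q \<le> (1 - (1 - l)) * (\<bar>a\<bar> / l) powr q + (1 - l) * (\<bar>b\<bar> / (1 - l)) powr q"
    using q l by (intro convex_powr_combination) auto
  also have "\<dots> = l powr (1 - q) * \<bar>a\<bar> powr q + (1 - l) powr (1 - q) * \<bar>b\<bar> powr q"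
    using l by (simp add: rescale)
  finally show ?thesis .
qed

lemma abs_add_powr_le:
  fixes q a b :: real
  assumes q: "0 < q" "q \<le> 1"
  shows "\<bar>a + b\<bar> powr q \<le> \<bar>a\<bar> powr q + \<bar>b\<bar> powr q"
proof -
  have "\<bar>a + b\<bar> powr q \<le> (\<bar>a\<bar> + \<bar>b\<bar>) powr q"
    using q by (intro powr_mono2) (auto simp: abs_triangle_ineq)
  also have "\<dots> \<le> \<bar>a\<bar> powr q + \<bar>b\<bar> powr q"
  proof (cases "\<bar>a\<bar> + \<bar>b\<bar> = 0")
    case False
    define s where "s = \<bar>a\<bar> + \<bar>b\<bar>"
    have s: "0 < s" using False by (simp add: s_def)
    have le_powr: "x / s \<le> (x / s) powr q" if "0 \<le> x" "x \<le> s" for x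
      using powr_mono'[of q 1 "x / s"] q s that by simp
    have "1 = \<bar>a\<bar> / s + \<bar>b\<bar> / s"
      using s by (simp add: s_def add_divide_distrib[symmetric])
    also have "\<dots> \<le> (\<bar>a\<bar> / s) powr q + (\<bar>b\<bar> / s) powr q"
      by (intro add_mono le_powr) (auto simp: s_def)
    also have "\<dots> = (\<bar>a\<bar> powr q + \<bar>b\<bar> powr q) / s powr q"
      by (simp add: powr_divide add_divide_distrib)
    finally show ?thesis using s by (simp add: s_def le_divide_eq)
  qed (simp add: add_nonneg_eq_0_iff)
  finally show ?thesis .
qed

text \<open>Minkowski's inequality for \<open>q \<ge> 1\<close> follows from \<open>abs_add_powr_le_weighted\<close> by
  integrating and then optimising over the weight \<open>l\<close>.\<close>

lemma powr_inverse_le_add_if_weighted_le: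
  fixes q A B X :: real
  assumes q: "1 \<le> q" and A: "0 \<le> A" and B: "0 \<le> B" and X: "0 \<le> X"
    and weighted: "\<And>l. 0 < l \<Longrightarrow> l < 1 \<Longrightarrow> X \<le> l powr (1 - q) * A + (1 - l) powr (1 - q) * B"
  shows "X powr (1 / q) \<le> A powr (1 / q) + B powr (1 / q)"
proof (rule field_le_epsilon)
  fix e :: real assume e: "0 < e"
  define a where "a = A powr (1 / q)"
  define b where "b = B powr (1 / q)"
  define S where "S = a + b + e"
  \<comment> \<open>the optimal weight \<open>a / (a + b)\<close>, perturbed so that \<open>0 < l < 1\<close>\<close>
  define l where "l = (a + e / 2) / S"
  have a: "0 \<le> a" "a powr q = A" and b: "0 \<le> b" "b powr q = B"
    using q A B by (simp_all add: a_def b_def powr_powr)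
  have S: "0 < S" using a b e by (simp add: S_def)
  have l: "0 < l" "l < 1" using a b e S by (auto simp: l_def S_def field_simps)
  have aS: "a \<le> l * S" and bS: "b \<le> (1 - l) * S"
    using S e a(1) b(1) by (simp_all add: l_def S_def field_simps)
  have weight_bound: "c powr (1 - q) * z powr q \<le> c * S powr q" if "0 < c" "0 \<le> z" "z \<le> c * S" for c z
  proof -
    have "c powr (1 - q) * z powr q \<le> c powr (1 - q) * (c * S) powr q"
      using q that by (intro mult_left_mono powr_mono2) auto
    also have "\<dots> = c * S powr q"
      using that S by (simp add: powr_mult powr_add[symmetric] mult.assoc[symmetric])
    finally show ?thesis .
  qed
  have "X \<le> l powr (1 - q) * A + (1 - l) powr (1 - q) * B" by (rule weighted[OF l])
  also have "\<dots> \<le> l * S powr q + (1 - l) * S powr q"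
  proof (intro add_mono)
    show "l powr (1 - q) * A \<le> l * S powr q"
      unfolding a(2)[symmetric] using l a aS by (intro weight_bound) auto
    show "(1 - l) powr (1 - q) * B \<le> (1 - l) * S powr q"
      unfolding b(2)[symmetric] using l b bS by (intro weight_bound) auto
  qed
  also have "\<dots> = S powr q" by (simp add: algebra_simps)
  finally have "X powr (1 / q) \<le> (S powr q) powr (1 / q)"
    using X q by (intro powr_mono2) auto
  also have "\<dots> = S" using S q by (simp add: powr_powr)
  finally show "X powr (1 / q) \<le> A powr (1 / q) + B powr (1 / q) + e"
    by (simp add: S_def a_def b_def)
qed

lemma enn2real_pos_if_finite: "0 < p \<Longrightarrow> p \<noteq> \<infinity> \<Longrightarrow> 0 < enn2real p"
  by (simp add: enn2real_positive_iff less_top)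

lemma enn2real_less_1_iff: "p \<noteq> \<infinity> \<Longrightarrow> enn2real p < 1 \<longleftrightarrow> p < 1"
  by (cases p) (auto simp: ennreal_less_one_iff)

section \<open>Affine changes of variables on the real line\<close>

lemma lebesgue_affine_measurable_real:
  fixes c t :: real
  assumes "c \<noteq> 0"
  shows "(\<lambda>x. t + c * x) \<in> lebesgue \<rightarrow>\<^sub>M lebesgue"
  using lebesgue_affine_measurable[where c="\<lambda>_. c" and t=t] assms by simp

lemma nn_integral_affine_comp_lebesgue:
  fixes c t :: real
  assumes "f \<in> borel_measurable lebesgue" "c \<noteq> 0"
  shows "(\<integral>\<^sup>+x. f (t + c * x) \<partial>lebesgue) = ennreal (1 / \<bar>c\<bar>) * (\<integral>\<^sup>+x. f x \<partial>lebesgue)"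
proof -
  have "ennreal (1 / \<bar>c\<bar>) * ennreal \<bar>c\<bar> = 1"
    using assms(2) by (simp add: ennreal_mult[symmetric])
  then show ?thesis
    unfolding nn_integral_real_affine_lebesgue[OF assms, of t] by (simp add: mult.assoc[symmetric])
qed

lemma AE_lebesgue_affine:
  fixes c t :: real
  assumes c: "c \<noteq> 0" and ae: "AE x in lebesgue. P x"
  shows "AE y in lebesgue. P (t + c * y)"
proof -
  from ae obtain Z where Z: "\<And>x. x \<in> space lebesgue - Z \<Longrightarrow> P x" "Z \<in> null_sets lebesgue"
    using AE_E3[OF ae] by metis
  have preimage: "(\<lambda>y. t + c * y) -` Z \<in> sets lebesgue"
    using measurable_sets[OF lebesgue_affine_measurable_real[OF c] null_setsD2[OF Z(2)]] by simp
  have "emeasure lebesgue ((\<lambda>y. t + c * y) -` Z) = (\<integral>\<^sup>+y. indicator Z (t + c * y) \<partial>lebesgue)"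
    using preimage by (simp add: nn_integral_indicator[symmetric] indicator_def)
  also have "\<dots> = ennreal (1 / \<bar>c\<bar>) * (\<integral>\<^sup>+x. indicator Z x \<partial>lebesgue)"
    using Z(2) c by (intro nn_integral_affine_comp_lebesgue) auto
  also have "\<dots> = 0"
    using null_setsD1[OF Z(2)] null_setsD2[OF Z(2)] by simp
  finally have "(\<lambda>y. t + c * y) -` Z \<in> null_sets lebesgue"
    using preimage by auto
  then show ?thesis
    by (rule AE_I') (use Z(1) in auto)
qed

section \<open>The partition of \<open>I\<close> and the maps \<open>L\<^sub>n\<^sup>-\<^sup>1\<close>\<close>

locale interval_partition =
  fixes xs :: "nat \<Rightarrow> real" and N :: nat
  assumes N_ge_2: "2 \<le> N" and xs_Suc_less: "\<forall>i<N. xs i < xs (Suc i)"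
begin

abbreviation "I \<equiv> Iint xs N"
abbreviation "\<mu> \<equiv> lebesgue_on (Iint xs N)"

lemma xs_strict_mono: "i < j \<Longrightarrow> j \<le> N \<Longrightarrow> xs i < xs j"
proof (induction j)
  case (Suc j)
  have "xs j < xs (Suc j)" using xs_Suc_less Suc.prems by simp
  with Suc show ?case by (cases "i < j") (auto simp: less_Suc_eq)
qed simp

lemma xs_mono: "i \<le> j \<Longrightarrow> j \<le> N \<Longrightarrow> xs i \<le> xs j"
  using xs_strict_mono[of i j] by (cases "i = j") auto

lemma xs_0_less_N: "xs 0 < xs N"
  using xs_strict_mono[of 0 N] N_ge_2 by simp

lemma xs_pred_less: "n \<in> {1..N} \<Longrightarrow> xs (n - 1) < xs n"
  using xs_strict_mono[of "n - 1" n] by simp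

lemma sets_Iint [simp]: "I \<in> sets lebesgue" and sets_Ipart [simp]: "Ipart xs n \<in> sets lebesgue"
  by (simp_all add: Iint_def Ipart_def)

lemma not_AE_False: "\<not> (AE t in \<mu>. False)"
proof -
  have "emeasure \<mu> (space \<mu>) \<noteq> 0"
    using xs_0_less_N by (simp add: emeasure_restrict_space Iint_def)
  then show ?thesis
    using ae_filter_eq_bot_iff[of \<mu>] by (simp add: eventually_False)
qed

lemma Ipart_subset:
  assumes "n \<in> {1..N}"
  shows "Ipart xs n \<subseteq> I"
proof -
  have "xs 0 \<le> xs (n - 1)" "xs n \<le> xs N" using assms xs_mono by auto
  then show ?thesis by (auto simp: Ipart_def Iint_def)
qed

lemma Ipart_cover:
  assumes "y \<in> I"
  obtains m where "m \<in> {1..N}" "y \<in> Ipart xs m"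
proof (cases "y \<le> xs 1")
  case True
  then show ?thesis
    using assms N_ge_2 that[of 1] by (auto simp: Ipart_def Iint_def)
next
  case False
  define k where "k = (LEAST k. y \<le> xs k)"
  have yN: "y \<le> xs N" using assms by (simp add: Iint_def)
  have k: "y \<le> xs k" "k \<le> N"
    unfolding k_def by (rule LeastI[of _ N] Least_le, rule yN)+
  have "2 \<le> k"
    using xs_mono[of k 1] N_ge_2 k False by (cases "k \<le> 1") auto
  moreover have "\<not> y \<le> xs (k - 1)"
    using not_less_Least[of "k - 1" "\<lambda>k. y \<le> xs k"] \<open>2 \<le> k\<close> unfolding k_def by simp
  ultimately show ?thesis
    using k that[of k] by (auto simp: Ipart_def)
qed

lemma Ipart_unique:
  assumes "m \<in> {1..N}" "n \<in> {1..N}" "y \<in> Ipart xs m" "y \<in> Ipart xs n"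
  shows "m = n"
proof -
  have False if "a \<in> {1..N}" "b \<in> {1..N}" "a < b" "y \<in> Ipart xs a" "y \<in> Ipart xs b" for a b
  proof -
    have "xs a \<le> xs (b - 1)" using that xs_mono by auto
    then show False using that by (auto simp: Ipart_def split: if_splits)
  qed
  then show ?thesis
    using assms by (metis linorder_neqE_nat)
qed

lemma sum_Ipart_at:
  fixes G :: "nat \<Rightarrow> 'b::comm_monoid_add"
  assumes "m \<in> {1..N}" "y \<in> Ipart xs m"
  shows "(\<Sum>n\<in>{1..N}. if y \<in> Ipart xs n then G n else 0) = G m"
proof -
  have "(\<Sum>n\<in>{1..N}. if y \<in> Ipart xs n then G n else 0) = (\<Sum>n\<in>{m}. if y \<in> Ipart xs n then G n else 0)"
    using assms Ipart_unique by (intro sum.mono_neutral_right) auto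
  then show ?thesis using assms by simp
qed

lemma sum_Ipart_length: "(\<Sum>n\<in>{1..N}. (xs n - xs (n - 1)) / (xs N - xs 0)) = 1"
proof -
  have "(\<Sum>n\<in>{1..K}. xs n - xs (n - 1)) = xs K - xs 0" for K
    by (induction K) simp_all
  then show ?thesis
    using xs_0_less_N by (simp add: sum_divide_distrib[symmetric])
qed

definition Linv_slope :: "nat \<Rightarrow> real" where
  "Linv_slope n = (xs N - xs 0) / (xs n - xs (n - 1))"

lemma Linv_slope_pos: "n \<in> {1..N} \<Longrightarrow> 0 < Linv_slope n"
  using xs_0_less_N xs_pred_less by (simp add: Linv_slope_def)

lemma Linv_slope_mult: "n \<in> {1..N} \<Longrightarrow> Linv_slope n * (xs n - xs (n - 1)) = xs N - xs 0"
  using xs_pred_less[of n] by (simp add: Linv_slope_def)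

lemma Linv_affine: "Linv xs N n = (\<lambda>y. (xs 0 - Linv_slope n * xs (n - 1)) + Linv_slope n * y)"
  unfolding Linv_def Linv_slope_def[symmetric] by (rule ext) (simp add: algebra_simps)

lemma Ipart_iff_Linv_mem:
  assumes n: "n \<in> {1..N}" and y: "y \<noteq> xs (n - 1)"
  shows "y \<in> Ipart xs n \<longleftrightarrow> Linv xs N n y \<in> I"
proof -
  let ?c = "Linv_slope n"
  have "Linv xs N n y \<in> I \<longleftrightarrow> 0 \<le> ?c * (y - xs (n - 1)) \<and> ?c * (y - xs (n - 1)) \<le> xs N - xs 0"
    by (auto simp: Linv_def Iint_def Linv_slope_def)
  also have "\<dots> \<longleftrightarrow> 0 \<le> y - xs (n - 1) \<and> ?c * (y - xs (n - 1)) \<le> ?c * (xs n - xs (n - 1))"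
    using Linv_slope_pos[OF n] Linv_slope_mult[OF n] by (simp add: zero_le_mult_iff)
  also have "\<dots> \<longleftrightarrow> xs (n - 1) \<le> y \<and> y \<le> xs n"
    using Linv_slope_pos[OF n] by simp
  also have "\<dots> \<longleftrightarrow> y \<in> Ipart xs n"
    using y by (auto simp: Ipart_def)
  finally show ?thesis ..
qed

lemma Linv_mem_Iint: "n \<in> {1..N} \<Longrightarrow> y \<in> Ipart xs n \<Longrightarrow> Linv xs N n y \<in> I"
  using Ipart_iff_Linv_mem[of n y] xs_pred_less[of n] xs_0_less_N
  by (cases "y = xs (n - 1)") (auto simp: Linv_def Iint_def)

lemma Linv_measurable: "n \<in> {1..N} \<Longrightarrow> Linv xs N n \<in> lebesgue \<rightarrow>\<^sub>M lebesgue"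
  unfolding Linv_affine by (rule lebesgue_affine_measurable_real) (use Linv_slope_pos in force)

lemma measurable_pullback:
  fixes \<psi> :: "real \<Rightarrow> 'a::{zero, topological_space}"
  assumes \<psi>: "\<psi> \<in> borel_measurable \<mu>" and n: "n \<in> {1..N}"
  shows "(\<lambda>y. if y \<in> Ipart xs n then \<psi> (Linv xs N n y) else 0) \<in> borel_measurable \<mu>"
proof -
  have sub: "Ipart xs n \<subseteq> I" by (rule Ipart_subset[OF n])
  have "Linv xs N n \<in> restrict_space lebesgue (Ipart xs n) \<rightarrow>\<^sub>M \<mu>"
    using Linv_measurable[OF n] Linv_mem_Iint[OF n] by (intro measurable_restrict_space3) auto
  then have "\<psi> \<circ> Linv xs N n \<in> borel_measurable (restrict_space lebesgue (Ipart xs n))"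
    using \<psi> by (rule measurable_comp)
  moreover have "restrict_space \<mu> {y. y \<in> Ipart xs n} = restrict_space lebesgue (Ipart xs n)"
    using sub by (simp add: restrict_restrict_space Int_absorb1)
  moreover have "{y \<in> I. y \<in> Ipart xs n} = Ipart xs n" using sub by auto
  ultimately show ?thesis
    using sub by (subst measurable_If_restrict_space_iff) (auto simp: sets_restrict_space_iff comp_def)
qed

lemma nn_integral_pullback:
  fixes \<psi> :: "real \<Rightarrow> ennreal"
  assumes \<psi>: "\<psi> \<in> borel_measurable \<mu>" and n: "n \<in> {1..N}"
  shows "(\<integral>\<^sup>+y. (if y \<in> Ipart xs n then \<psi> (Linv xs N n y) else 0) \<partial>\<mu>)
       = ennreal ((xs n - xs (n - 1)) / (xs N - xs 0)) * (\<integral>\<^sup>+t. \<psi> t \<partial>\<mu>)"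
proof -
  define c where "c = Linv_slope n"
  define t0 where "t0 = xs 0 - c * xs (n - 1)"
  have c: "0 < c" unfolding c_def by (rule Linv_slope_pos[OF n])
  have Linv: "Linv xs N n = (\<lambda>y. t0 + c * y)" unfolding c_def t0_def by (rule Linv_affine)
  define \<psi>' where "\<psi>' t = \<psi> t * indicator I t" for t
  have \<psi>': "\<psi>' \<in> borel_measurable lebesgue"
    using \<psi> borel_measurable_restrict_space_iff_ennreal[of I lebesgue \<psi>] by (simp add: \<psi>'_def[abs_def])
  have "(\<integral>\<^sup>+y. (if y \<in> Ipart xs n then \<psi> (Linv xs N n y) else 0) \<partial>\<mu>)
      = (\<integral>\<^sup>+y. (if y \<in> Ipart xs n then \<psi> (Linv xs N n y) else 0) * indicator I y \<partial>lebesgue)"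
    by (simp add: nn_integral_restrict_space)
  also have "\<dots> = (\<integral>\<^sup>+y. \<psi>' (t0 + c * y) \<partial>lebesgue)"
  proof (rule nn_integral_cong_AE)
    have "AE y in lebesgue. y \<noteq> xs (n - 1)"
      using AE_completion[OF AE_lborel_singleton[of "xs (n - 1)"]] by simp
    then show "AE y in lebesgue.
        (if y \<in> Ipart xs n then \<psi> (Linv xs N n y) else 0) * indicator I y = \<psi>' (t0 + c * y)"
    proof eventually_elim
      case (elim y)
      then show ?case
        using Ipart_iff_Linv_mem[OF n elim] Ipart_subset[OF n]
        by (auto simp: \<psi>'_def Linv indicator_def)
    qed
  qed
  also have "\<dots> = ennreal (1 / c) * (\<integral>\<^sup>+t. \<psi>' t \<partial>lebesgue)"
    using nn_integral_affine_comp_lebesgue[OF \<psi>', of c t0] c by simp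
  also have "(\<integral>\<^sup>+t. \<psi>' t \<partial>lebesgue) = (\<integral>\<^sup>+t. \<psi> t \<partial>\<mu>)"
    by (simp add: nn_integral_restrict_space \<psi>'_def)
  also have "1 / c = (xs n - xs (n - 1)) / (xs N - xs 0)"
    by (simp add: c_def Linv_slope_def)
  finally show ?thesis .
qed

lemma AE_pullback:
  assumes ae: "AE t in \<mu>. P t" and n: "n \<in> {1..N}"
  shows "AE y in \<mu>. y \<in> Ipart xs n \<longrightarrow> P (Linv xs N n y)"
proof -
  define c where "c = Linv_slope n"
  define t0 where "t0 = xs 0 - c * xs (n - 1)"
  have c: "0 < c" unfolding c_def by (rule Linv_slope_pos[OF n])
  have Linv: "Linv xs N n = (\<lambda>y. t0 + c * y)" unfolding c_def t0_def by (rule Linv_affine)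
  have "AE t in lebesgue. t \<in> I \<longrightarrow> P t"
    using ae by (simp add: AE_restrict_space_iff)
  then have "AE y in lebesgue. t0 + c * y \<in> I \<longrightarrow> P (t0 + c * y)"
    using c by (intro AE_lebesgue_affine) auto
  then have "AE y in lebesgue. y \<in> I \<longrightarrow> y \<in> Ipart xs n \<longrightarrow> P (Linv xs N n y)"
    by eventually_elim (use Linv_mem_Iint[OF n] in \<open>auto simp: Linv\<close>)
  then show ?thesis
    by (simp add: AE_restrict_space_iff)
qed

end

section \<open>The spaces \<open>L\<^sup>p(I)\<close>\<close>

lemma Lp_measurable: "u \<in> Lp xs N p \<Longrightarrow> u \<in> borel_measurable (lebesgue_on (Iint xs N))"
  by (simp add: Lp_def)

lemma lpnorm_uminus [simp]: "lpnorm xs N p (\<lambda>t. - u t) = lpnorm xs N p u"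
  by (simp add: lpnorm_def)

lemma lpnorm_abs [simp]: "lpnorm xs N p (\<lambda>t. \<bar>u t\<bar>) = lpnorm xs N p u"
  by (simp add: lpnorm_def)

lemma Lp_uminus: "u \<in> Lp xs N p \<Longrightarrow> (\<lambda>t. - u t) \<in> Lp xs N p"
  by (auto simp: Lp_def split: if_splits)

lemma Lp_abs: "u \<in> Lp xs N p \<Longrightarrow> (\<lambda>t. \<bar>u t\<bar>) \<in> Lp xs N p"
  by (auto simp: Lp_def split: if_splits)

context interval_partition
begin

definition powr_integral :: "real \<Rightarrow> (real \<Rightarrow> real) \<Rightarrow> ennreal" where
  "powr_integral q u = (\<integral>\<^sup>+t. ennreal (\<bar>u t\<bar> powr q) \<partial>\<mu>)"

lemma Lp_finite_iff:
  "p \<noteq> \<infinity> \<Longrightarrow> u \<in> Lp xs N p \<longleftrightarrow> u \<in> borel_measurable \<mu> \<and> powr_integral (enn2real p) u < \<infinity>"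
  by (simp add: Lp_def powr_integral_def)

lemma lpnorm_finite:
  "p \<noteq> \<infinity> \<Longrightarrow> lpnorm xs N p u = (if p < 1 then enn2real (powr_integral (enn2real p) u)
                                      else enn2real (powr_integral (enn2real p) u) powr (1 / enn2real p))"
  by (simp add: lpnorm_def powr_integral_def)

lemma Linf_iff: "u \<in> Lp xs N \<infinity> \<longleftrightarrow> u \<in> borel_measurable \<mu> \<and> esssup \<mu> (\<lambda>t. ereal \<bar>u t\<bar>) < \<infinity>"
  by (simp add: Lp_def)

lemma lpnorm_infinity: "lpnorm xs N \<infinity> u = real_of_ereal (esssup \<mu> (\<lambda>t. ereal \<bar>u t\<bar>))"
  by (simp add: lpnorm_def)

lemma esssup_abs_nonneg: "0 \<le> esssup \<mu> (\<lambda>t. ereal \<bar>u t\<bar>)"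
proof (rule ccontr)
  assume neg: "\<not> 0 \<le> esssup \<mu> (\<lambda>t. ereal \<bar>u t\<bar>)"
  have "AE t in \<mu>. False"
    using esssup_AE[of "\<lambda>t. ereal \<bar>u t\<bar>" \<mu>]
  proof eventually_elim
    case (elim t)
    have "0 \<le> ereal \<bar>u t\<bar>" by simp
    with elim neg show False by (meson order_trans)
  qed
  then show False using not_AE_False by simp
qed

lemma lpnorm_nonneg: "0 \<le> lpnorm xs N p u"
  using esssup_abs_nonneg[of u] by (simp add: lpnorm_def real_of_ereal_pos)

lemma Linf_AE_abs_le:
  assumes "u \<in> Lp xs N \<infinity>"
  shows "AE t in \<mu>. \<bar>u t\<bar> \<le> lpnorm xs N \<infinity> u"
proof -
  have "esssup \<mu> (\<lambda>t. ereal \<bar>u t\<bar>) = ereal (lpnorm xs N \<infinity> u)"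
    using assms esssup_abs_nonneg[of u] unfolding Linf_iff lpnorm_infinity
    by (cases "esssup \<mu> (\<lambda>t. ereal \<bar>u t\<bar>)") auto
  then show ?thesis
    using esssup_AE[of "\<lambda>t. ereal \<bar>u t\<bar>" \<mu>] by (auto elim: eventually_mono)
qed

lemma Linf_if_AE_abs_le:
  assumes u: "u \<in> borel_measurable \<mu>" and bound: "AE t in \<mu>. \<bar>u t\<bar> \<le> M"
  shows "u \<in> Lp xs N \<infinity>" and "lpnorm xs N \<infinity> u \<le> M"
proof -
  have le: "esssup \<mu> (\<lambda>t. ereal \<bar>u t\<bar>) \<le> ereal M"
    using u bound by (intro esssup_I) (auto elim: eventually_mono)
  then show "u \<in> Lp xs N \<infinity>"
    unfolding Linf_iff using u by (auto intro: le_less_trans)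
  show "lpnorm xs N \<infinity> u \<le> M"
    using le esssup_abs_nonneg[of u] unfolding lpnorm_infinity
    by (cases "esssup \<mu> (\<lambda>t. ereal \<bar>u t\<bar>)") auto
qed

lemma powr_integral_mono_AE:
  "0 \<le> q \<Longrightarrow> AE t in \<mu>. \<bar>u t\<bar> \<le> \<bar>v t\<bar> \<Longrightarrow> powr_integral q u \<le> powr_integral q v"
  unfolding powr_integral_def
  by (rule nn_integral_mono_AE) (auto elim!: eventually_mono intro!: ennreal_leI powr_mono2)

lemma lpnorm_cong_AE:
  assumes "u \<in> borel_measurable \<mu>" "v \<in> borel_measurable \<mu>" "AE t in \<mu>. u t = v t"
  shows "lpnorm xs N p u = lpnorm xs N p v"
proof -
  have "esssup \<mu> (\<lambda>t. ereal \<bar>u t\<bar>) = esssup \<mu> (\<lambda>t. ereal \<bar>v t\<bar>)"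
    using assms by (intro esssup_AE_cong) (auto elim: eventually_mono)
  moreover have "powr_integral q u = powr_integral q v" for q
    unfolding powr_integral_def using assms(3) by (intro nn_integral_cong_AE) (auto elim: eventually_mono)
  ultimately show ?thesis
    by (simp add: lpnorm_def powr_integral_def[symmetric])
qed

lemma Lp_dominated:
  assumes h: "h \<in> borel_measurable \<mu>" and g: "g \<in> Lp xs N p" and bound: "AE t in \<mu>. \<bar>h t\<bar> \<le> g t"
  shows "h \<in> Lp xs N p"
proof (cases "p = \<infinity>")
  case True
  have "AE t in \<mu>. \<bar>h t\<bar> \<le> lpnorm xs N \<infinity> g"
    using bound Linf_AE_abs_le[of g] g True by (auto elim: eventually_mono)
  then show ?thesis using Linf_if_AE_abs_le(1)[OF h] True by blast
next
  case False
  have "powr_integral (enn2real p) h \<le> powr_integral (enn2real p) g"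
    using bound by (intro powr_integral_mono_AE) (auto elim: eventually_mono)
  then show ?thesis
    using g h False by (auto simp: Lp_finite_iff intro: le_less_trans)
qed

lemma powr_integral_less_top: "p \<noteq> \<infinity> \<Longrightarrow> u \<in> Lp xs N p \<Longrightarrow> powr_integral (enn2real p) u < \<infinity>"
  using Lp_finite_iff by blast

lemma powr_integral_eq_lpnorm:
  assumes p: "0 < p" "p \<noteq> \<infinity>" and u: "u \<in> Lp xs N p"
  shows "powr_integral (enn2real p) u
       = ennreal (if p < 1 then lpnorm xs N p u else lpnorm xs N p u powr enn2real p)"
proof -
  have "powr_integral (enn2real p) u = ennreal (enn2real (powr_integral (enn2real p) u))"
    using powr_integral_less_top[OF p(2) u] by (simp add: less_top)
  then show ?thesis
    using enn2real_pos_if_finite[OF p] by (simp add: lpnorm_finite[OF p(2)] powr_powr)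
qed

lemma powr_integral_add_le:
  assumes q: "0 < q" "q \<le> 1" and u: "u \<in> borel_measurable \<mu>" and v: "v \<in> borel_measurable \<mu>"
  shows "powr_integral q (\<lambda>t. u t + v t) \<le> powr_integral q u + powr_integral q v"
proof -
  have "powr_integral q (\<lambda>t. u t + v t)
      \<le> (\<integral>\<^sup>+t. ennreal (\<bar>u t\<bar> powr q) + ennreal (\<bar>v t\<bar> powr q) \<partial>\<mu>)"
    unfolding powr_integral_def using abs_add_powr_le[OF q]
    by (intro nn_integral_mono) (simp add: ennreal_plus[symmetric] ennreal_leI del: ennreal_plus)
  also have "\<dots> = powr_integral q u + powr_integral q v"
    unfolding powr_integral_def using u v by (intro nn_integral_add) auto
  finally show ?thesis .
qed

lemma powr_integral_add_le_weighted:
  assumes q: "1 \<le> q" and l: "0 < l" "l < 1"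
    and u: "u \<in> borel_measurable \<mu>" and v: "v \<in> borel_measurable \<mu>"
  shows "powr_integral q (\<lambda>t. u t + v t)
       \<le> ennreal (l powr (1 - q)) * powr_integral q u + ennreal ((1 - l) powr (1 - q)) * powr_integral q v"
proof -
  have "powr_integral q (\<lambda>t. u t + v t)
      \<le> (\<integral>\<^sup>+t. ennreal (l powr (1 - q)) * ennreal (\<bar>u t\<bar> powr q)
               + ennreal ((1 - l) powr (1 - q)) * ennreal (\<bar>v t\<bar> powr q) \<partial>\<mu>)"
    unfolding powr_integral_def using abs_add_powr_le_weighted[OF q l]
    by (intro nn_integral_mono)
      (simp add: ennreal_plus[symmetric] ennreal_mult'[symmetric] ennreal_leI del: ennreal_plus)
  also have "\<dots> = ennreal (l powr (1 - q)) * powr_integral q u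
                  + ennreal ((1 - l) powr (1 - q)) * powr_integral q v"
    unfolding powr_integral_def using u v by (simp add: nn_integral_add nn_integral_cmult)
  finally show ?thesis .
qed

lemma Lp_add:
  assumes p: "0 < p" and u: "u \<in> Lp xs N p" and v: "v \<in> Lp xs N p"
  shows "(\<lambda>t. u t + v t) \<in> Lp xs N p"
proof -
  have meas: "(\<lambda>t. u t + v t) \<in> borel_measurable \<mu>"
    using Lp_measurable[OF u] Lp_measurable[OF v] by measurable
  consider "p = \<infinity>" | "p \<noteq> \<infinity>" "p < 1" | "p \<noteq> \<infinity>" "\<not> p < 1" by blast
  then show ?thesis
  proof cases
    case 1
    with u v have u': "u \<in> Lp xs N \<infinity>" and v': "v \<in> Lp xs N \<infinity>" by simp_all
    have "AE t in \<mu>. \<bar>u t + v t\<bar> \<le> lpnorm xs N \<infinity> u + lpnorm xs N \<infinity> v"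
      using Linf_AE_abs_le[OF u'] Linf_AE_abs_le[OF v']
      by eventually_elim (meson abs_triangle_ineq add_mono order_trans)
    then show ?thesis using Linf_if_AE_abs_le(1)[OF meas] 1 by blast
  next
    case 2
    then have "powr_integral (enn2real p) (\<lambda>t. u t + v t)
        \<le> powr_integral (enn2real p) u + powr_integral (enn2real p) v"
      using enn2real_pos_if_finite[OF p] enn2real_less_1_iff[of p] Lp_measurable[OF u] Lp_measurable[OF v]
      by (intro powr_integral_add_le) auto
    then show ?thesis
      using 2 meas powr_integral_less_top[OF _ u] powr_integral_less_top[OF _ v]
      by (auto simp: Lp_finite_iff intro: le_less_trans)
  next
    case 3
    then have "powr_integral (enn2real p) (\<lambda>t. u t + v t)
        \<le> ennreal ((1 / 2) powr (1 - enn2real p)) * powr_integral (enn2real p) u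
          + ennreal ((1 - 1 / 2) powr (1 - enn2real p)) * powr_integral (enn2real p) v"
      using enn2real_less_1_iff[of p] Lp_measurable[OF u] Lp_measurable[OF v]
      by (intro powr_integral_add_le_weighted) auto
    then show ?thesis
      using 3 meas powr_integral_less_top[OF _ u] powr_integral_less_top[OF _ v]
      by (auto simp: Lp_finite_iff ennreal_mult_less_top intro: le_less_trans)
  qed
qed

lemma lpnorm_triangle_finite:
  assumes p: "0 < p" "p \<noteq> \<infinity>" and u: "u \<in> Lp xs N p" and v: "v \<in> Lp xs N p"
  shows "lpnorm xs N p (\<lambda>t. u t + v t) \<le> lpnorm xs N p u + lpnorm xs N p v"
proof -
  define q where "q = enn2real p"
  define J where "J w = enn2real (powr_integral q w)" for w
  have J_nonneg: "0 \<le> J w" for w by (simp add: J_def)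
  have J: "powr_integral q w = ennreal (J w)" if "w \<in> Lp xs N p" for w
    using powr_integral_less_top[OF p(2) that] by (simp add: J_def q_def less_top)
  have lpnorm: "lpnorm xs N p w = (if q < 1 then J w else J w powr (1 / q))" for w
    using lpnorm_finite[OF p(2)] enn2real_less_1_iff[OF p(2)] by (simp add: J_def q_def)
  have J_le: "J w \<le> B" if "powr_integral q w \<le> ennreal B" "0 \<le> B" for w B
    using that by (simp add: J_def enn2real_leI)
  show ?thesis
  proof (cases "q < 1")
    case True
    have "J (\<lambda>t. u t + v t) \<le> J u + J v"
      using powr_integral_add_le[OF _ less_imp_le[OF True] Lp_measurable[OF u] Lp_measurable[OF v]]
        enn2real_pos_if_finite[OF p] J[OF u] J[OF v]
      by (intro J_le) (auto simp: q_def J_nonneg)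
    then show ?thesis using True by (simp add: lpnorm)
  next
    case False
    have "J (\<lambda>t. u t + v t) powr (1 / q) \<le> J u powr (1 / q) + J v powr (1 / q)"
    proof (rule powr_inverse_le_add_if_weighted_le)
      fix l :: real assume l: "0 < l" "l < 1"
      show "J (\<lambda>t. u t + v t) \<le> l powr (1 - q) * J u + (1 - l) powr (1 - q) * J v"
        using powr_integral_add_le_weighted[OF _ l Lp_measurable[OF u] Lp_measurable[OF v], of q]
          False J[OF u] J[OF v]
        by (intro J_le) (auto simp: J_nonneg ennreal_mult'[symmetric] ennreal_plus[symmetric]
            simp del: ennreal_plus)
    qed (use False J_nonneg in auto)
    then show ?thesis using False by (simp add: lpnorm)
  qed
qed

lemma nn_integral_SUP_powr_le:
  assumes q: "0 < q" and u: "\<And>n. u n \<in> borel_measurable \<mu>"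
    and bound: "\<And>n. powr_integral q (u n) \<le> K"
    and nonneg: "\<And>n y. 0 \<le> u n y" and inc: "\<And>y. incseq (\<lambda>n. u n y)"
  shows "(\<integral>\<^sup>+y. (SUP n. ennreal (u n y powr q)) \<partial>\<mu>) \<le> K"
proof -
  have "(\<integral>\<^sup>+y. (SUP n. ennreal (u n y powr q)) \<partial>\<mu>) = (SUP n. \<integral>\<^sup>+y. ennreal (u n y powr q) \<partial>\<mu>)"
    using u inc nonneg q
    by (intro nn_integral_monotone_convergence_SUP)
      (auto simp: incseq_def le_fun_def intro!: ennreal_leI powr_mono2)
  also have "\<dots> \<le> K"
    using bound nonneg by (auto intro!: SUP_least simp: powr_integral_def)
  finally show ?thesis .
qed

lemma powr_integral_incseq_dominated:
  assumes q: "0 < q" and u: "\<And>n. u n \<in> borel_measurable \<mu>"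
    and bound: "\<And>n. powr_integral q (u n) \<le> ennreal K"
    and nonneg: "\<And>n y. 0 \<le> u n y" and inc: "\<And>y. incseq (\<lambda>n. u n y)"
  obtains g where "g \<in> borel_measurable \<mu>" "powr_integral q g \<le> ennreal K"
    "AE y in \<mu>. \<forall>n. u n y \<le> g y"
proof -
  define S where "S y = (SUP n. ennreal (u n y powr q))" for y
  define g where "g y = enn2real (S y) powr (1 / q)" for y
  have S_meas: "S \<in> borel_measurable \<mu>"
    unfolding S_def using u by measurable
  have int_S: "(\<integral>\<^sup>+y. S y \<partial>\<mu>) \<le> ennreal K"
    unfolding S_def using assms by (rule nn_integral_SUP_powr_le)
  have "g \<in> borel_measurable \<mu>"
    unfolding g_def[abs_def] using S_meas by measurable
  moreover have "powr_integral q g \<le> (\<integral>\<^sup>+y. S y \<partial>\<mu>)"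
    unfolding powr_integral_def g_def using q
    by (intro nn_integral_mono) (auto simp: powr_powr ennreal_enn2real_if)
  then have "powr_integral q g \<le> ennreal K"
    using int_S by (rule order_trans)
  moreover have "AE y in \<mu>. \<forall>n. u n y \<le> g y"
  proof -
    have "AE y in \<mu>. S y \<noteq> \<infinity>"
      using int_S by (intro nn_integral_PInf_AE[OF S_meas]) (auto simp: top_unique)
    then show ?thesis
    proof eventually_elim
      case (elim y)
      have "u n y \<le> g y" for n
      proof -
        have "ennreal (u n y powr q) \<le> S y" unfolding S_def by (rule SUP_upper) simp
        then have "enn2real (ennreal (u n y powr q)) \<le> enn2real (S y)"
          using elim by (intro enn2real_mono) (auto simp: less_top)
        then have "u n y powr q \<le> enn2real (S y)" by simp
        then have "(u n y powr q) powr (1 / q) \<le> g y"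
          unfolding g_def using q by (intro powr_mono2) auto
        then show ?thesis using q nonneg[of n y] by (simp add: powr_powr)
      qed
      then show ?case by blast
    qed
  qed
  ultimately show ?thesis by (rule that)
qed

lemma Lp_incseq_dominated:
  assumes p: "0 < p" and u: "\<And>n. u n \<in> Lp xs N p" and bound: "\<And>n. lpnorm xs N p (u n) \<le> M"
    and nonneg: "\<And>n y. 0 \<le> u n y" and inc: "\<And>y. incseq (\<lambda>n. u n y)"
  shows "\<exists>g\<in>Lp xs N p. AE y in \<mu>. \<forall>n. u n y \<le> g y"
proof (cases "p = \<infinity>")
  case True
  have "AE y in \<mu>. u n y \<le> M" for n
    using Linf_AE_abs_le[of "u n"] u bound[of n] True by (auto elim: eventually_mono)
  then have "AE y in \<mu>. \<forall>n. u n y \<le> M"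
    by (simp add: AE_all_countable)
  moreover have "(\<lambda>y. M) \<in> Lp xs N p"
    using Linf_if_AE_abs_le(1)[of "\<lambda>y. M" "\<bar>M\<bar>"] True by simp
  ultimately show ?thesis by (auto intro!: bexI[of _ "\<lambda>y. M"])
next
  case False
  define q where "q = enn2real p"
  define K where "K = (if p < 1 then M else M powr q)"
  have q: "0 < q" using enn2real_pos_if_finite[OF p False] by (simp add: q_def)
  have u_meas: "u n \<in> borel_measurable \<mu>" for n using Lp_measurable[OF u] .
  have "powr_integral q (u n) \<le> ennreal K" for n
    using powr_integral_eq_lpnorm[OF p False u, of n] bound[of n] lpnorm_nonneg[of p "u n"] q
    by (auto simp: K_def q_def intro!: ennreal_leI powr_mono2)
  then obtain g where g: "g \<in> borel_measurable \<mu>" "powr_integral q g \<le> ennreal K"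
      "AE y in \<mu>. \<forall>n. u n y \<le> g y"
    using powr_integral_incseq_dominated[where u=u and K=K, OF q u_meas] nonneg inc by blast
  then have "g \<in> Lp xs N p"
    using False by (auto simp: Lp_finite_iff q_def intro: le_less_trans)
  with g(3) show ?thesis by blast
qed

lemma delta_le: "g \<in> A \<Longrightarrow> g' \<in> C \<Longrightarrow> delta xs N p A C \<le> lpnorm xs N p (\<lambda>t. g t - g' t)"
  unfolding delta_def using lpnorm_nonneg by (intro cInf_lower bdd_belowI[of _ 0]) auto

end

section \<open>The linear part of the operator \<open>T\<close>\<close>

locale fractal_setting = interval_partition +
  fixes \<alpha> :: "nat \<Rightarrow> real \<Rightarrow> real"
  assumes alpha_Linf: "\<forall>n\<in>{1..N}. \<alpha> n \<in> Lp xs N \<infinity>" and Lam_less_1: "Lam xs N \<alpha> < 1"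
begin

abbreviation "lam \<equiv> real_of_ereal (Lam xs N \<alpha>)"

definition Top_linear :: "(real \<Rightarrow> real) \<Rightarrow> real \<Rightarrow> real" where
  "Top_linear \<phi> y = (\<Sum>n\<in>{1..N}. if y \<in> Ipart xs n then \<alpha> n (Linv xs N n y) * \<phi> (Linv xs N n y) else 0)"

lemma Top_eq_Top_linear: "Top xs N \<alpha> f b g y = f y + Top_linear (\<lambda>t. g t - b t) y"
  unfolding Top_def Top_linear_def by (intro arg_cong[where f="(+) (f y)"] sum.cong refl) simp

lemma Top_linear_at:
  "m \<in> {1..N} \<Longrightarrow> y \<in> Ipart xs m \<Longrightarrow> Top_linear \<phi> y = \<alpha> m (Linv xs N m y) * \<phi> (Linv xs N m y)"
  unfolding Top_linear_def by (rule sum_Ipart_at)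

lemma Top_linear_diff: "Top_linear (\<lambda>t. u t - v t) y = Top_linear u y - Top_linear v y"
  unfolding Top_linear_def sum_subtractf[symmetric] by (intro sum.cong) (auto simp: right_diff_distrib)

lemma alpha_measurable: "n \<in> {1..N} \<Longrightarrow> \<alpha> n \<in> borel_measurable \<mu>"
  using alpha_Linf by (auto simp: Lp_def)

lemma Top_linear_measurable:
  assumes "\<phi> \<in> borel_measurable \<mu>"
  shows "Top_linear \<phi> \<in> borel_measurable \<mu>"
proof -
  have "(\<lambda>y. if y \<in> Ipart xs n then \<alpha> n (Linv xs N n y) * \<phi> (Linv xs N n y) else 0) \<in> borel_measurable \<mu>"
    if "n \<in> {1..N}" for n
    using measurable_pullback[of "\<lambda>t. \<alpha> n t * \<phi> t"] alpha_measurable assms that by simp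
  then show ?thesis
    unfolding Top_linear_def[abs_def] by (rule borel_measurable_sum)
qed

lemma lam_nonneg: "0 \<le> lam" and lam_less_1: "lam < 1"
  and AE_abs_alpha_le_lam: "n \<in> {1..N} \<Longrightarrow> AE t in \<mu>. \<bar>\<alpha> n t\<bar> \<le> lam"
proof -
  have Lam: "Lam xs N \<alpha> \<le> ereal lam"
    using Lam_less_1 by (cases "Lam xs N \<alpha>") auto
  show alpha: "AE t in \<mu>. \<bar>\<alpha> n t\<bar> \<le> lam" if "n \<in> {1..N}" for n
  proof -
    have "esssup \<mu> (\<lambda>t. ereal \<bar>\<alpha> n t\<bar>) \<le> Lam xs N \<alpha>"
      using that unfolding Lam_def by (intro Max_ge) auto
    then have le: "esssup \<mu> (\<lambda>t. ereal \<bar>\<alpha> n t\<bar>) \<le> ereal lam"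
      using Lam by (rule order_trans)
    from esssup_AE[of "\<lambda>t. ereal \<bar>\<alpha> n t\<bar>" \<mu>] show ?thesis
    proof eventually_elim
      case (elim t)
      then have "ereal \<bar>\<alpha> n t\<bar> \<le> ereal lam" using le by (rule order_trans)
      then show ?case by simp
    qed
  qed
  show "0 \<le> lam"
  proof (rule ccontr)
    assume "\<not> 0 \<le> lam"
    then have "AE t in \<mu>. False" using alpha[of 1] N_ge_2 by (auto elim: eventually_mono)
    then show False using not_AE_False by simp
  qed
  show "lam < 1"
    using Lam_less_1 by (cases "Lam xs N \<alpha>") auto
qed

lemma AE_abs_alpha_Linv_le_lam:
  "AE y in \<mu>. \<forall>n\<in>{1..N}. y \<in> Ipart xs n \<longrightarrow> \<bar>\<alpha> n (Linv xs N n y)\<bar> \<le> lam"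
  by (intro AE_finite_allI AE_pullback AE_abs_alpha_le_lam) auto

lemma AE_Top_linear_powr_le:
  assumes q: "0 < q"
  shows "AE y in \<mu>. ennreal (\<bar>Top_linear \<phi> y\<bar> powr q) \<le> (\<Sum>n\<in>{1..N}. ennreal (lam powr q) *
           (if y \<in> Ipart xs n then ennreal (\<bar>\<phi> (Linv xs N n y)\<bar> powr q) else 0))"
  (is "AE y in \<mu>. _ \<le> (\<Sum>n\<in>{1..N}. _ * ?pull n y)")
proof -
  let ?\<psi> = "\<lambda>t. ennreal (\<bar>\<phi> t\<bar> powr q)"
  show ?thesis
    using AE_abs_alpha_Linv_le_lam AE_space
  proof eventually_elim
    case (elim y)
    then obtain m where m: "m \<in> {1..N}" "y \<in> Ipart xs m" by (auto elim: Ipart_cover)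
    have "\<bar>\<alpha> m (Linv xs N m y)\<bar> powr q * \<bar>\<phi> (Linv xs N m y)\<bar> powr q
        \<le> lam powr q * \<bar>\<phi> (Linv xs N m y)\<bar> powr q"
      using elim m q by (intro mult_right_mono powr_mono2) auto
    then have "ennreal (\<bar>Top_linear \<phi> y\<bar> powr q) \<le> ennreal (lam powr q) * ?\<psi> (Linv xs N m y)"
      by (simp add: Top_linear_at[OF m] abs_mult powr_mult ennreal_mult'[symmetric] ennreal_leI
          del: ennreal_mult')
    also have "\<dots> = (\<Sum>n\<in>{1..N}. ennreal (lam powr q) * ?pull n y)"
      using sum_Ipart_at[OF m, of "\<lambda>n. ennreal (lam powr q) * ?\<psi> (Linv xs N n y)"]
      by (simp only: mult_zero_right if_distrib)
    finally show ?case .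
  qed
qed

lemma powr_integral_Top_linear_le:
  assumes q: "0 < q" and \<phi>: "\<phi> \<in> borel_measurable \<mu>"
  shows "powr_integral q (Top_linear \<phi>) \<le> ennreal (lam powr q) * powr_integral q \<phi>"
proof -
  let ?\<psi> = "\<lambda>t. ennreal (\<bar>\<phi> t\<bar> powr q)"
  let ?pull = "\<lambda>n y. if y \<in> Ipart xs n then ?\<psi> (Linv xs N n y) else 0"
  have \<psi>: "?\<psi> \<in> borel_measurable \<mu>" using \<phi> by measurable
  have "(\<integral>\<^sup>+y. ennreal (\<bar>Top_linear \<phi> y\<bar> powr q) \<partial>\<mu>)
      \<le> (\<integral>\<^sup>+y. (\<Sum>n\<in>{1..N}. ennreal (lam powr q) * ?pull n y) \<partial>\<mu>)"
    using AE_Top_linear_powr_le[OF q] by (rule nn_integral_mono_AE)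
  also have "\<dots> = (\<Sum>n\<in>{1..N}. (\<integral>\<^sup>+y. ennreal (lam powr q) * ?pull n y \<partial>\<mu>))"
    using measurable_pullback[OF \<psi>] by (intro nn_integral_sum borel_measurable_times_ennreal) auto
  also have "\<dots> = (\<Sum>n\<in>{1..N}. ennreal (lam powr q) * (\<integral>\<^sup>+y. ?pull n y \<partial>\<mu>))"
    using measurable_pullback[OF \<psi>] by (intro sum.cong refl nn_integral_cmult) auto
  also have "\<dots> = (\<Sum>n\<in>{1..N}. ennreal (lam powr q) *
      (ennreal ((xs n - xs (n - 1)) / (xs N - xs 0)) * (\<integral>\<^sup>+t. ?\<psi> t \<partial>\<mu>)))"
    by (simp add: nn_integral_pullback[OF \<psi>])
  also have "\<dots> = ennreal (lam powr q) * (\<integral>\<^sup>+t. ?\<psi> t \<partial>\<mu>) *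
      ennreal (\<Sum>n\<in>{1..N}. (xs n - xs (n - 1)) / (xs N - xs 0))"
  proof -
    have "0 \<le> (xs n - xs (n - 1)) / (xs N - xs 0)" if "n \<in> {1..N}" for n
      using xs_pred_less[OF that] xs_0_less_N by simp
    then show ?thesis
      by (subst sum_ennreal[symmetric]) (auto simp: sum_distrib_left mult_ac)
  qed
  finally show ?thesis by (simp only: sum_Ipart_length ennreal_1 mult_1_right powr_integral_def)
qed

lemma AE_abs_Top_linear_le:
  assumes bound: "AE t in \<mu>. \<bar>\<phi> t\<bar> \<le> M" and M: "0 \<le> M"
  shows "AE y in \<mu>. \<bar>Top_linear \<phi> y\<bar> \<le> lam * M"
proof -
  have "AE y in \<mu>. \<forall>n\<in>{1..N}. y \<in> Ipart xs n \<longrightarrow> \<bar>\<phi> (Linv xs N n y)\<bar> \<le> M"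
    using bound by (intro AE_finite_allI AE_pullback) auto
  then show ?thesis
    using AE_abs_alpha_Linv_le_lam AE_space
  proof eventually_elim
    case (elim y)
    then obtain m where m: "m \<in> {1..N}" "y \<in> Ipart xs m" by (auto elim: Ipart_cover)
    then show ?case
      using elim lam_nonneg by (auto simp: Top_linear_at abs_mult intro: mult_mono)
  qed
qed

lemma lpnorm_Top_linear_infinity:
  assumes "u \<in> Lp xs N \<infinity>"
  shows "Top_linear u \<in> Lp xs N \<infinity>" and "lpnorm xs N \<infinity> (Top_linear u) \<le> lam * lpnorm xs N \<infinity> u"
  using Linf_if_AE_abs_le[OF Top_linear_measurable[OF Lp_measurable[OF assms]]
      AE_abs_Top_linear_le[OF Linf_AE_abs_le[OF assms] lpnorm_nonneg]] .

lemma Lp_Top_linear: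
  assumes p: "0 < p" and u: "u \<in> Lp xs N p"
  shows "Top_linear u \<in> Lp xs N p"
proof (cases "p = \<infinity>")
  case True
  then show ?thesis using lpnorm_Top_linear_infinity(1) u by simp
next
  case False
  have "powr_integral (enn2real p) (Top_linear u) < \<infinity>"
    using powr_integral_Top_linear_le[OF enn2real_pos_if_finite[OF p False] Lp_measurable[OF u]]
      powr_integral_less_top[OF False u]
    by (auto simp: ennreal_mult_less_top intro: le_less_trans)
  then show ?thesis
    using Top_linear_measurable[OF Lp_measurable[OF u]] False by (simp add: Lp_finite_iff)
qed

lemma lpnorm_Top_linear_finite:
  assumes p: "0 < p" "p \<noteq> \<infinity>" and u: "u \<in> Lp xs N p"
  shows "lpnorm xs N p (Top_linear u) \<le> (if p < 1 then lam powr enn2real p else lam) * lpnorm xs N p u"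
proof -
  define q where "q = enn2real p"
  define J where "J w = enn2real (powr_integral q w)" for w
  have q: "0 < q" "q < 1 \<longleftrightarrow> p < 1"
    unfolding q_def using enn2real_pos_if_finite[OF p] enn2real_less_1_iff[OF p(2)] by auto
  have J_nonneg: "0 \<le> J w" for w by (simp add: J_def)
  have lpnorm: "lpnorm xs N p w = (if q < 1 then J w else J w powr (1 / q))" for w
    using lpnorm_finite[OF p(2)] q by (simp add: J_def q_def)
  have "ennreal (lam powr q * J u) = ennreal (lam powr q) * powr_integral q u"
    using powr_integral_less_top[OF p(2) u] by (simp add: J_def q_def ennreal_mult' less_top)
  then have "powr_integral q (Top_linear u) \<le> ennreal (lam powr q * J u)"
    using powr_integral_Top_linear_le[OF q(1) Lp_measurable[OF u]] by simp
  then have J_Top_linear: "J (Top_linear u) \<le> lam powr q * J u"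
    using lam_nonneg J_nonneg[of u] by (simp add: J_def enn2real_leI)
  show ?thesis
  proof (cases "q < 1")
    case True
    then show ?thesis using J_Top_linear q by (simp add: lpnorm q_def[symmetric])
  next
    case False
    have "J (Top_linear u) powr (1 / q) \<le> (lam powr q * J u) powr (1 / q)"
      using J_Top_linear J_nonneg q by (intro powr_mono2) auto
    also have "\<dots> = (lam powr q) powr (1 / q) * J u powr (1 / q)"
      using lam_nonneg J_nonneg by (simp add: powr_mult)
    also have "(lam powr q) powr (1 / q) = lam powr (q * (1 / q))" by (rule powr_powr)
    also have "q * (1 / q) = 1" using q by simp
    also have "lam powr 1 = lam" by (rule powr_one[OF lam_nonneg])
    finally show ?thesis using False q by (simp add: lpnorm q_def[symmetric])
  qed
qed

lemma Neumann_series_fixed_point: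
  assumes y: "y \<in> I" and summable: "summable (\<lambda>k. \<bar>(Top_linear ^^ k) c y\<bar>)"
  shows "(\<Sum>k. (Top_linear ^^ k) c y) = c y + Top_linear (\<lambda>t. \<Sum>k. (Top_linear ^^ k) c t) y"
proof -
  obtain m where m: "m \<in> {1..N}" "y \<in> Ipart xs m" using Ipart_cover[OF y] by blast
  define z where "z = Linv xs N m y"
  define w where "w = \<alpha> m z"
  have step: "(Top_linear ^^ Suc k) c y = w * (Top_linear ^^ k) c z" for k
    by (simp add: Top_linear_at[OF m] z_def w_def)
  have head: "(\<Sum>k. (Top_linear ^^ k) c y) = c y + (\<Sum>k. (Top_linear ^^ Suc k) c y)"
    using suminf_split_head[OF summable_rabs_cancel[OF summable]] by simp
  show ?thesis
  proof (cases "w = 0")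
    case True
    then show ?thesis
      unfolding head step Top_linear_at[OF m] by (simp add: z_def[symmetric] w_def[symmetric])
  next
    case False
    have "summable (\<lambda>k. \<bar>(Top_linear ^^ Suc k) c y\<bar>)"
      using summable by (subst summable_Suc_iff)
    then have "summable (\<lambda>k. \<bar>w\<bar> * \<bar>(Top_linear ^^ k) c z\<bar>)"
      unfolding step abs_mult .
    then have "summable (\<lambda>k. (Top_linear ^^ k) c z)"
      using False by (simp add: summable_cmult_iff summable_rabs_cancel)
    then have "(\<Sum>k. (Top_linear ^^ Suc k) c y) = w * (\<Sum>k. (Top_linear ^^ k) c z)"
      unfolding step by (rule suminf_mult)
    then show ?thesis
      unfolding head Top_linear_at[OF m] by (simp add: z_def[symmetric] w_def[symmetric])
  qed
qed

end

section \<open>Fixed points of \<open>T\<close> and the distance estimates\<close>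

locale fractal_Lp_space = fractal_setting +
  fixes p :: ennreal and L :: real
  assumes p_pos: "0 < p" and L_nonneg: "0 \<le> L" and L_less_1: "L < 1"
    and lpnorm_triangle:
      "u \<in> Lp xs N p \<Longrightarrow> v \<in> Lp xs N p \<Longrightarrow>
        lpnorm xs N p (\<lambda>t. u t + v t) \<le> lpnorm xs N p u + lpnorm xs N p v"
    and lpnorm_Top_linear_le: "u \<in> Lp xs N p \<Longrightarrow> lpnorm xs N p (Top_linear u) \<le> L * lpnorm xs N p u"
begin

lemma Lp_diff: "u \<in> Lp xs N p \<Longrightarrow> v \<in> Lp xs N p \<Longrightarrow> (\<lambda>t. u t - v t) \<in> Lp xs N p"
  using Lp_add[OF p_pos _ Lp_uminus] by simp

lemma lpnorm_diff_le:
  "u \<in> Lp xs N p \<Longrightarrow> v \<in> Lp xs N p \<Longrightarrow> lpnorm xs N p (\<lambda>t. u t - v t) \<le> lpnorm xs N p u + lpnorm xs N p v"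
  using lpnorm_triangle[OF _ Lp_uminus] by simp

lemma lpnorm_sum_le:
  assumes "finite K" "K \<noteq> {}" "\<And>k. k \<in> K \<Longrightarrow> f k \<in> Lp xs N p"
  shows "(\<lambda>t. \<Sum>k\<in>K. f k t) \<in> Lp xs N p \<and> lpnorm xs N p (\<lambda>t. \<Sum>k\<in>K. f k t) \<le> (\<Sum>k\<in>K. lpnorm xs N p (f k))"
  using assms
proof (induction K rule: finite_ne_induct)
  case (insert k K)
  then show ?case
    using Lp_add[OF p_pos] lpnorm_triangle[of "f k" "\<lambda>t. \<Sum>k\<in>K. f k t"] by auto
qed simp

lemma Top_linear_funpow:
  assumes "u \<in> Lp xs N p"
  shows "(Top_linear ^^ k) u \<in> Lp xs N p \<and> lpnorm xs N p ((Top_linear ^^ k) u) \<le> L ^ k * lpnorm xs N p u"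
proof (induction k)
  case (Suc k)
  then have "lpnorm xs N p ((Top_linear ^^ Suc k) u) \<le> L * (L ^ k * lpnorm xs N p u)"
    using lpnorm_Top_linear_le L_nonneg by (auto intro: order_trans mult_left_mono)
  then show ?case
    using Suc Lp_Top_linear[OF p_pos] by (simp add: mult.assoc)
qed (simp add: assms)

lemma Neumann_partial_sums_dominated:
  assumes c: "c \<in> Lp xs N p"
  obtains G where "G \<in> Lp xs N p" "AE y in \<mu>. \<forall>n. (\<Sum>k\<le>n. \<bar>(Top_linear ^^ k) c y\<bar>) \<le> G y"
proof -
  define u where "u n y = (\<Sum>k\<le>n. \<bar>(Top_linear ^^ k) c y\<bar>)" for n y
  have u: "u n \<in> Lp xs N p"
    and u_sum: "lpnorm xs N p (u n) \<le> (\<Sum>k\<le>n. lpnorm xs N p ((Top_linear ^^ k) c))" for n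
    using lpnorm_sum_le[of "{..n}" "\<lambda>k t. \<bar>(Top_linear ^^ k) c t\<bar>"] Lp_abs Top_linear_funpow[OF c]
    by (simp_all add: u_def[abs_def])
  have u_bound: "lpnorm xs N p (u n) \<le> 1 / (1 - L) * lpnorm xs N p c" for n
  proof -
    have "(\<Sum>k\<le>n. L ^ k) = (1 - L ^ Suc n) / (1 - L)"
      using L_less_1 unfolding lessThan_Suc_atMost[symmetric] sum_gp_strict by simp
    also have "\<dots> \<le> 1 / (1 - L)"
      using L_nonneg L_less_1 by (simp add: divide_right_mono)
    finally have "(\<Sum>k\<le>n. L ^ k) * lpnorm xs N p c \<le> 1 / (1 - L) * lpnorm xs N p c"
      by (rule mult_right_mono[OF _ lpnorm_nonneg])
    moreover have "(\<Sum>k\<le>n. lpnorm xs N p ((Top_linear ^^ k) c)) \<le> (\<Sum>k\<le>n. L ^ k) * lpnorm xs N p c"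
      unfolding sum_distrib_right using Top_linear_funpow[OF c] by (intro sum_mono) blast
    ultimately show ?thesis using u_sum[of n] by linarith
  qed
  have u_nonneg: "0 \<le> u n y" for n y
    by (simp add: u_def sum_nonneg)
  have u_inc: "incseq (\<lambda>n. u n y)" for y
    by (rule incseq_SucI) (simp add: u_def)
  show ?thesis
    using Lp_incseq_dominated[where u=u, OF p_pos u u_bound u_nonneg u_inc] that
    unfolding u_def by blast
qed

lemma fixed_point_exists:
  assumes g: "g \<in> Lp xs N p" and b: "b \<in> Lp xs N p"
  shows "\<exists>h\<in>Lp xs N p. AE y in \<mu>. Top xs N \<alpha> g b h y = h y"
proof -
  define c where "c y = g y - Top_linear b y" for y
  define a where "a k = (Top_linear ^^ k) c" for k
  define h where "h y = (\<Sum>k. a k y)" for y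
  have c: "c \<in> Lp xs N p"
    unfolding c_def[abs_def] using Lp_diff[OF g Lp_Top_linear[OF p_pos b]] .
  obtain G where G: "G \<in> Lp xs N p" "AE y in \<mu>. \<forall>n. (\<Sum>k\<le>n. \<bar>a k y\<bar>) \<le> G y"
    using Neumann_partial_sums_dominated[OF c] unfolding a_def by blast
  have summable: "summable (\<lambda>k. \<bar>a k y\<bar>)" and "\<bar>h y\<bar> \<le> G y"
    if "\<forall>n. (\<Sum>k\<le>n. \<bar>a k y\<bar>) \<le> G y" for y
  proof -
    have partial: "(\<Sum>k<n. \<bar>a k y\<bar>) \<le> G y" for n
    proof -
      have "(\<Sum>k<n. \<bar>a k y\<bar>) \<le> (\<Sum>k\<le>n. \<bar>a k y\<bar>)" by (rule sum_mono2) auto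
      also have "\<dots> \<le> G y" using that by blast
      finally show ?thesis .
    qed
    then show "summable (\<lambda>k. \<bar>a k y\<bar>)" by (intro summableI_nonneg_bounded) auto
    then show "\<bar>h y\<bar> \<le> G y"
      unfolding h_def using partial by (intro order_trans[OF summable_rabs] suminf_le_const)
  qed
  have "h \<in> Lp xs N p"
  proof (rule Lp_dominated[OF _ G(1)])
    show "h \<in> borel_measurable \<mu>"
      unfolding h_def[abs_def] a_def using Top_linear_funpow[OF c] Lp_measurable
      by (intro borel_measurable_suminf) blast
    show "AE y in \<mu>. \<bar>h y\<bar> \<le> G y"
      using G(2) by eventually_elim fact
  qed
  moreover have "AE y in \<mu>. Top xs N \<alpha> g b h y = h y"
    using G(2) AE_space
  proof eventually_elim
    case (elim y)
    then have "h y = c y + Top_linear h y"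
      unfolding h_def[abs_def] a_def using Neumann_series_fixed_point summable[OF elim(1)] by (simp add: a_def)
    then show ?case
      by (simp add: Top_eq_Top_linear Top_linear_diff c_def)
  qed
  ultimately show ?thesis by blast
qed

lemma fstar_fixed_point:
  assumes "g \<in> Lp xs N p" "b \<in> Lp xs N p"
  shows "fstar xs N \<alpha> p g b \<in> Lp xs N p"
    and "AE y in \<mu>. Top xs N \<alpha> g b (fstar xs N \<alpha> p g b) y = fstar xs N \<alpha> p g b y"
  using someI_ex[OF fixed_point_exists[OF assms, unfolded Bex_def]]
  unfolding fstar_def by blast+

lemma lpnorm_minus_fstar_le:
  assumes g: "g \<in> Lp xs N p" and b: "b \<in> Lp xs N p"
  shows "lpnorm xs N p (\<lambda>t. g t - fstar xs N \<alpha> p g b t) \<le> L / (1 - L) * (lpnorm xs N p g + lpnorm xs N p b)"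
    and "lpnorm xs N p (\<lambda>t. b t - fstar xs N \<alpha> p g b t) \<le> 1 / (1 - L) * (lpnorm xs N p g + lpnorm xs N p b)"
proof -
  define h where "h = fstar xs N \<alpha> p g b"
  have h: "h \<in> Lp xs N p" unfolding h_def by (rule fstar_fixed_point(1)[OF g b])
  let ?X = "lpnorm xs N p (\<lambda>t. h t - g t)" and ?Y = "lpnorm xs N p (\<lambda>t. h t - b t)"
  have "?X = lpnorm xs N p (Top_linear (\<lambda>t. h t - b t))"
    using fstar_fixed_point(2)[OF g b] Lp_measurable[OF Lp_diff[OF h g]]
      Top_linear_measurable[OF Lp_measurable[OF Lp_diff[OF h b]]]
    by (intro lpnorm_cong_AE) (auto simp: h_def Top_eq_Top_linear elim: eventually_mono)
  also have "\<dots> \<le> L * ?Y" by (rule lpnorm_Top_linear_le[OF Lp_diff[OF h b]])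
  finally have X: "?X \<le> L * ?Y" .
  have "?Y \<le> ?X + lpnorm xs N p (\<lambda>t. g t - b t)"
    using lpnorm_triangle[OF Lp_diff[OF h g] Lp_diff[OF g b]] by simp
  also have "\<dots> \<le> ?X + (lpnorm xs N p g + lpnorm xs N p b)"
    using lpnorm_diff_le[OF g b] by simp
  finally have Y: "?Y \<le> ?X + (lpnorm xs N p g + lpnorm xs N p b)" .
  have gh: "lpnorm xs N p (\<lambda>t. g t - h t) = ?X" and bh: "lpnorm xs N p (\<lambda>t. b t - h t) = ?Y"
    using lpnorm_uminus[where u="\<lambda>t. h t - g t"] lpnorm_uminus[where u="\<lambda>t. h t - b t"] by simp_all
  have "?X * (1 - L) \<le> L * (lpnorm xs N p g + lpnorm xs N p b)"
    using X mult_left_mono[OF Y L_nonneg] by (simp add: algebra_simps)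
  then show "lpnorm xs N p (\<lambda>t. g t - fstar xs N \<alpha> p g b t) \<le> L / (1 - L) * (lpnorm xs N p g + lpnorm xs N p b)"
    using L_less_1 unfolding h_def[symmetric] gh by (simp add: field_simps)
  have "?Y * (1 - L) \<le> lpnorm xs N p g + lpnorm xs N p b"
    using X Y by (simp add: algebra_simps)
  then show "lpnorm xs N p (\<lambda>t. b t - fstar xs N \<alpha> p g b t) \<le> 1 / (1 - L) * (lpnorm xs N p g + lpnorm xs N p b)"
    using L_less_1 unfolding h_def[symmetric] bh by (simp add: field_simps)
qed

lemma delta_fstar_bounds:
  assumes F: "F \<subseteq> Lp xs N p" "F \<noteq> {}" "\<forall>g\<in>F. lpnorm xs N p g \<le> MF"
    and B: "B \<subseteq> Lp xs N p" "B \<noteq> {}" "\<forall>g\<in>B. lpnorm xs N p g \<le> MB"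
    and f: "f \<in> Lp xs N p" and b: "b \<in> Lp xs N p"
  shows "delta xs N p F ((\<lambda>f'. fstar xs N \<alpha> p f' b) ` F) \<le> L / (1 - L) * (MF + lpnorm xs N p b)"
    and "delta xs N p B ((\<lambda>b'. fstar xs N \<alpha> p f b') ` B) \<le> 1 / (1 - L) * (MB + lpnorm xs N p f)"
proof -
  obtain g where g: "g \<in> F" using F(2) by blast
  have "delta xs N p F ((\<lambda>f'. fstar xs N \<alpha> p f' b) ` F) \<le> lpnorm xs N p (\<lambda>t. g t - fstar xs N \<alpha> p g b t)"
    using g by (intro delta_le) auto
  also have "\<dots> \<le> L / (1 - L) * (lpnorm xs N p g + lpnorm xs N p b)"
    using g F(1) b by (intro lpnorm_minus_fstar_le(1)) auto
  also have "\<dots> \<le> L / (1 - L) * (MF + lpnorm xs N p b)"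
    using g F(3) L_nonneg L_less_1 by (intro mult_left_mono) auto
  finally show "delta xs N p F ((\<lambda>f'. fstar xs N \<alpha> p f' b) ` F) \<le> L / (1 - L) * (MF + lpnorm xs N p b)" .
  obtain b' where b': "b' \<in> B" using B(2) by blast
  have "delta xs N p B ((\<lambda>b'. fstar xs N \<alpha> p f b') ` B) \<le> lpnorm xs N p (\<lambda>t. b' t - fstar xs N \<alpha> p f b' t)"
    using b' by (intro delta_le) auto
  also have "\<dots> \<le> 1 / (1 - L) * (lpnorm xs N p f + lpnorm xs N p b')"
    using b' B(1) f by (intro lpnorm_minus_fstar_le(2)) auto
  also have "\<dots> \<le> 1 / (1 - L) * (MB + lpnorm xs N p f)"
    using b' B(3) L_less_1 by (intro mult_left_mono) auto
  finally show "delta xs N p B ((\<lambda>b'. fstar xs N \<alpha> p f b') ` B) \<le> 1 / (1 - L) * (MB + lpnorm xs N p f)" .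
qed

end

context fractal_setting
begin

lemma fractal_Lp_space_infinity: "fractal_Lp_space xs N \<alpha> \<infinity> lam"
proof (intro fractal_Lp_space.intro fractal_setting_axioms fractal_Lp_space_axioms.intro)
  fix u v assume u: "u \<in> Lp xs N \<infinity>" and v: "v \<in> Lp xs N \<infinity>"
  have "AE t in \<mu>. \<bar>u t + v t\<bar> \<le> lpnorm xs N \<infinity> u + lpnorm xs N \<infinity> v"
    using Linf_AE_abs_le[OF u] Linf_AE_abs_le[OF v] by eventually_elim auto
  then show "lpnorm xs N \<infinity> (\<lambda>t. u t + v t) \<le> lpnorm xs N \<infinity> u + lpnorm xs N \<infinity> v"
    using Lp_measurable[OF u] Lp_measurable[OF v] by (intro Linf_if_AE_abs_le(2)) auto
qed (use lam_nonneg lam_less_1 lpnorm_Top_linear_infinity(2) in auto)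

lemma fractal_Lp_space_finite:
  assumes p: "0 < p" "p \<noteq> \<infinity>"
  shows "fractal_Lp_space xs N \<alpha> p (if p < 1 then lam powr enn2real p else lam)"
proof (intro fractal_Lp_space.intro fractal_setting_axioms fractal_Lp_space_axioms.intro)
  show "(if p < 1 then lam powr enn2real p else lam) < 1"
    using lam_nonneg lam_less_1 powr_less_mono2[of "enn2real p" lam 1] enn2real_pos_if_finite[OF p]
    by auto
qed (use p lam_nonneg lpnorm_triangle_finite lpnorm_Top_linear_finite in auto)

end

theorem proposition5p1:
  fixes xs :: "nat \<Rightarrow> real" and N :: nat and \<alpha> :: "nat \<Rightarrow> real \<Rightarrow> real"
    and p :: ennreal and F B :: "(real \<Rightarrow> real) set" and MF MB :: real
    and f b :: "real \<Rightarrow> real"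
  assumes "2 \<le> N"
    and "\<forall>i<N. xs i < xs (Suc i)"
    and "\<forall>n\<in>{1..N}. \<alpha> n \<in> Lp xs N \<infinity>"
    and "Lam xs N \<alpha> < 1"
    and "0 < p"
    and "F \<subseteq> Lp xs N p" and "F \<noteq> {}" and "\<forall>g\<in>F. lpnorm xs N p g \<le> MF"
    and "B \<subseteq> Lp xs N p" and "B \<noteq> {}" and "\<forall>g\<in>B. lpnorm xs N p g \<le> MB"
    and "f \<in> Lp xs N p" and "b \<in> Lp xs N p"
  shows "let \<Lambda> = (if p < 1 then real_of_ereal (Lam xs N \<alpha>) powr enn2real p
                   else real_of_ereal (Lam xs N \<alpha>))
         in delta xs N p F ((\<lambda>f'. fstar xs N \<alpha> p f' b) ` F)
              \<le> \<Lambda> / (1 - \<Lambda>) * (MF + lpnorm xs N p b)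
          \<and> delta xs N p B ((\<lambda>b'. fstar xs N \<alpha> p f b') ` B)
              \<le> 1 / (1 - \<Lambda>) * (MB + lpnorm xs N p f)"
proof -
  interpret fractal_setting xs N \<alpha>
    using assms(1-4) by unfold_locales
  have "fractal_Lp_space xs N \<alpha> p (if p < 1 then lam powr enn2real p else lam)"
    using fractal_Lp_space_infinity fractal_Lp_space_finite[OF assms(5)] by (cases "p = \<infinity>") auto
  from fractal_Lp_space.delta_fstar_bounds[OF this assms(6-13)] show ?thesis
    by (simp add: Let_def)
qed

end
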